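(* For any two different words $x,y$ over a finite alphabet $\Sigma$, there is a 2-state MCQFA (with complex amplitudes) that separates $x$ and $y$ in nondeterministic mode.
   Context: A 2-state Moore–Crutchfield quantum finite automaton (MCQFA) over $\Sigma$ consists of a unitary $U_\sigma\in\mathbb{C}^{2\times 2}$ for each $\sigma\in\Sigma$, an initial unit vector $|u_0\rangle\in\mathbb{C}^2$ and a set of accepting basis states; on input $w=w_1\cdots w_k$ the final state is $U_{w_k}\cdots U_{w_1}|u_0\rangle$ and the acceptance probability is the sum of the squared moduli of its accepting coordinates. The automaton separates $x$ and $y$ in nondeterministic mode if one of them is accepted with nonzero probability and the other with probability $0$. *)

theory Defs
  imports "HOL-Analysis.Analysis"
begin

definition cadj :: "complex^'n^'m \<Rightarrow> complex^'m^'n" where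
  "cadj A = (\<chi> i j. cnj (A $ j $ i))"

definition unitary_mat :: "complex^'n^'n \<Rightarrow> bool" where
  "unitary_mat U \<longleftrightarrow> cadj U ** U = mat 1 \<and> U ** cadj U = mat 1"

record 's mcqfa2 =
  trans :: "'s \<Rightarrow> complex^2^2"
  init :: "complex^2"
  accepting :: "2 set"

definition is_mcqfa2 :: "'s mcqfa2 \<Rightarrow> bool" where
  "is_mcqfa2 M \<longleftrightarrow> (\<forall>\<sigma>. unitary_mat (trans M \<sigma>)) \<and> norm (init M) = 1"

text \<open>Final state U_{w_k} ... U_{w_1} u0: letters applied left to right.\<close>
definition final_state :: "'s mcqfa2 \<Rightarrow> 's list \<Rightarrow> complex^2" where
  "final_state M w = fold (\<lambda>\<sigma> v. trans M \<sigma> *v v) w (init M)"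

definition acc_prob :: "'s mcqfa2 \<Rightarrow> 's list \<Rightarrow> real" where
  "acc_prob M w = (\<Sum>q\<in>accepting M. (cmod (final_state M w $ q))\<^sup>2)"

definition separates_nondet :: "'s mcqfa2 \<Rightarrow> 's list \<Rightarrow> 's list \<Rightarrow> bool" where
  "separates_nondet M x y \<longleftrightarrow>
     (acc_prob M x > 0 \<and> acc_prob M y = 0) \<or> (acc_prob M y > 0 \<and> acc_prob M x = 0)"

end

theory Submission
  imports Defs
begin

text \<open>Scaled by \<open>1/\<surd>3\<close>, two Gaussian-integer matrices \<open>HA\<close>, \<open>HB\<close> become unitary.
  Reduced modulo 3, where \<open>\<int>[i]\<close> becomes the field with nine elements, each of them and each
  adjoint has rank one, and all pairings between consecutive factors are units; hence every
  product of them (and of their adjoints) is again of rank one mod 3 with nonzero corner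
  entry \<open>(1,2)\<close>. Let \<open>a\<close> be a letter where \<open>x\<close> and \<open>y\<close> first differ (or any letter if one is a
  prefix of the other), send \<open>a\<close> to \<open>HA\<close> and all other letters to \<open>HB\<close>. After cancelling the
  common prefix, \<open>U\<^sub>y U\<^sub>x\<^sup>*\<close> is such a product, so the automaton started in \<open>U\<^sub>x\<^sup>* e\<^sub>2\<close>
  rejects \<open>x\<close> with certainty and accepts \<open>y\<close> with positive probability.\<close>

section \<open>Gaussian integers modulo 3\<close>

definition gaussian_int :: "complex \<Rightarrow> bool" where
  "gaussian_int z \<longleftrightarrow> Re z \<in> \<int> \<and> Im z \<in> \<int>"

lemma gaussian_int_add [intro]: "gaussian_int a \<Longrightarrow> gaussian_int b \<Longrightarrow> gaussian_int (a + b)"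
  and gaussian_int_mult [intro]: "gaussian_int a \<Longrightarrow> gaussian_int b \<Longrightarrow> gaussian_int (a * b)"
  and gaussian_int_minus [intro]: "gaussian_int a \<Longrightarrow> gaussian_int (- a)"
  and gaussian_int_cnj [intro]: "gaussian_int a \<Longrightarrow> gaussian_int (cnj a)"
  by (auto simp: gaussian_int_def)

lemma gaussian_int_numeral [simp]: "gaussian_int (numeral n)"
  by (simp add: gaussian_int_def)

lemma gaussian_intE:
  assumes "gaussian_int z"
  obtains a b :: int where "z = Complex (of_int a) (of_int b)"
  using assms by (metis Ints_cases complex.exhaust_sel gaussian_int_def)

lemma three_dvd_sum_squares:
  fixes a b :: int
  assumes "3 dvd a\<^sup>2 + b\<^sup>2"
  shows "3 dvd a \<and> 3 dvd b"
proof -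
  have "((a mod 3)\<^sup>2 mod 3 + (b mod 3)\<^sup>2 mod 3) mod 3 = (a\<^sup>2 + b\<^sup>2) mod 3"
    by (simp only: power_mod mod_add_eq)
  then have sq: "((a mod 3)\<^sup>2 mod 3 + (b mod 3)\<^sup>2 mod 3) mod 3 = 0"
    using assms by simp
  have "a mod 3 = 0 \<or> a mod 3 = 1 \<or> a mod 3 = 2" "b mod 3 = 0 \<or> b mod 3 = 1 \<or> b mod 3 = 2"
    by presburger+
  then show ?thesis using sq by (elim disjE) (simp_all add: dvd_eq_mod_eq_0)
qed

lemma of_int_div3_Ints: "(of_int a / 3 :: real) \<in> \<int> \<longleftrightarrow> 3 dvd a"
proof
  assume "(of_int a / 3 :: real) \<in> \<int>"
  then obtain k where "of_int a / 3 = (of_int k :: real)" by (rule Ints_cases)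
  then have "(of_int a :: real) = of_int (3 * k)" by simp
  then have "a = 3 * k" by (simp only: of_int_eq_iff)
  then show "3 dvd a" by simp
qed auto

lemma numeral_div3_Ints [simp]: "(numeral n / 3 :: real) \<in> \<int> \<longleftrightarrow> 3 dvd (numeral n :: int)"
  using of_int_div3_Ints[of "numeral n"] by simp

lemma one_div3_not_Ints [simp]: "(1 / 3 :: real) \<notin> \<int>"
  using of_int_div3_Ints[of 1] by simp

lemma gaussian_int_div3_iff:
  "gaussian_int (Complex (of_int a) (of_int b) / 3) \<longleftrightarrow> 3 dvd a \<and> 3 dvd b"
  by (simp add: gaussian_int_def of_int_div3_Ints)

text \<open>3 is prime in \<open>\<int>[i]\<close>: via norms this reduces to the fact that \<open>a\<^sup>2 + b\<^sup>2\<close> is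
  divisible by 3 only if \<open>a\<close> and \<open>b\<close> are.\<close>

lemma gaussian_int_div3_mult:
  assumes z: "gaussian_int z" and w: "gaussian_int w" and zw: "gaussian_int (z * w / 3)"
  shows "gaussian_int (z / 3) \<or> gaussian_int (w / 3)"
proof -
  obtain a b c d :: int where zw_def: "z = Complex a b" "w = Complex c d"
    using z w by (metis gaussian_intE)
  have "z * w = Complex (of_int (a*c - b*d)) (of_int (a*d + b*c))"
    by (simp add: zw_def complex_eq_iff)
  with zw have "3 dvd a*c - b*d \<and> 3 dvd a*d + b*c"
    by (simp only: gaussian_int_div3_iff)
  then have "3 dvd (a*c - b*d)\<^sup>2 + (a*d + b*c)\<^sup>2" by (simp add: power2_eq_square)
  also have "(a*c - b*d)\<^sup>2 + (a*d + b*c)\<^sup>2 = (a\<^sup>2 + b\<^sup>2) * (c\<^sup>2 + d\<^sup>2)"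
    by algebra
  finally have "3 dvd a\<^sup>2 + b\<^sup>2 \<or> 3 dvd c\<^sup>2 + d\<^sup>2"
    using prime_dvd_mult_iff[of "3::int"] by simp
  then show ?thesis
    by (auto dest!: three_dvd_sum_squares simp: zw_def gaussian_int_div3_iff)
qed

definition nonzero_mod3 :: "complex \<Rightarrow> bool" where
  "nonzero_mod3 z \<longleftrightarrow> gaussian_int z \<and> \<not> gaussian_int (z / 3)"

lemma nonzero_mod3_mult: "nonzero_mod3 z \<Longrightarrow> nonzero_mod3 w \<Longrightarrow> nonzero_mod3 (z * w)"
  unfolding nonzero_mod3_def using gaussian_int_div3_mult by blast

lemma nonzero_mod3_cnj: "nonzero_mod3 z \<Longrightarrow> nonzero_mod3 (cnj z)"
  unfolding nonzero_mod3_def using gaussian_int_cnj[of "cnj z / 3"] by auto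

lemma nonzero_mod3_add_3_mult:
  assumes "nonzero_mod3 z" "gaussian_int e"
  shows "z + 3 * e \<noteq> 0"
proof
  assume "z + 3 * e = 0"
  then have "z / 3 = - e" by (simp add: field_simps add_eq_0_iff)
  then show False using assms by (auto simp: nonzero_mod3_def)
qed

lemma gaussian_int_sum: "(\<And>k. k \<in> S \<Longrightarrow> gaussian_int (f k)) \<Longrightarrow> gaussian_int (sum f S)"
  by (auto simp: gaussian_int_def Re_sum Im_sum intro: Ints_sum)

section \<open>Matrices of rank one modulo 3\<close>

definition gaussian_vec :: "complex^'n \<Rightarrow> bool" where
  "gaussian_vec v \<longleftrightarrow> (\<forall>i. gaussian_int (v $ i))"

definition gaussian_mat :: "complex^'n^'m \<Rightarrow> bool" where
  "gaussian_mat A \<longleftrightarrow> (\<forall>i j. gaussian_int (A $ i $ j))"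

definition vec_cnj :: "complex^'n \<Rightarrow> complex^'n" where
  "vec_cnj v = (\<chi> i. cnj (v $ i))"

definition rank_one_mod3 :: "complex^'n^'m \<Rightarrow> complex^'m \<Rightarrow> complex^'n \<Rightarrow> bool" where
  "rank_one_mod3 A c r \<longleftrightarrow> gaussian_vec c \<and> gaussian_vec r \<and>
     (\<exists>l E. nonzero_mod3 l \<and> gaussian_mat E \<and> A = (\<chi> i j. l * c $ i * r $ j + 3 * E $ i $ j))"

lemma rank_one_mod3_mult:
  assumes A: "rank_one_mod3 A c r" and B: "rank_one_mod3 B c' r'"
    and rc': "nonzero_mod3 (\<Sum>k\<in>UNIV. r $ k * c' $ k)"
  shows "rank_one_mod3 (A ** B) c r'"
proof -
  obtain l E where l: "nonzero_mod3 l" "gaussian_mat E"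
    and A_eq: "A = (\<chi> i j. l * c $ i * r $ j + 3 * E $ i $ j)"
    using A unfolding rank_one_mod3_def by blast
  obtain l' F where l': "nonzero_mod3 l'" "gaussian_mat F"
    and B_eq: "B = (\<chi> i j. l' * c' $ i * r' $ j + 3 * F $ i $ j)"
    using B unfolding rank_one_mod3_def by blast
  define s where "s = (\<Sum>k\<in>UNIV. r $ k * c' $ k)"
  define G where "G = (\<chi> i j. l * c $ i * (\<Sum>k\<in>UNIV. r $ k * F $ k $ j)
      + l' * (\<Sum>k\<in>UNIV. E $ i $ k * c' $ k) * r' $ j + 3 * (\<Sum>k\<in>UNIV. E $ i $ k * F $ k $ j))"
  have gauss: "gaussian_vec c" "gaussian_vec r" "gaussian_vec c'" "gaussian_vec r'"
    using A B by (simp_all add: rank_one_mod3_def)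
  have "gaussian_mat G"
    using gauss l l' unfolding G_def gaussian_mat_def gaussian_vec_def nonzero_mod3_def
    by (auto intro!: gaussian_int_add gaussian_int_mult gaussian_int_sum)
  moreover have "nonzero_mod3 (l * l' * s)"
    using l l' rc' by (simp add: s_def nonzero_mod3_mult)
  moreover have "A ** B = (\<chi> i j. (l * l' * s) * c $ i * r' $ j + 3 * G $ i $ j)"
    unfolding A_eq B_eq G_def s_def
    by (simp add: vec_eq_iff matrix_matrix_mult_def sum.distrib sum_distrib_left
        sum_distrib_right algebra_simps)
  ultimately show ?thesis
    using gauss unfolding rank_one_mod3_def by blast
qed

lemma rank_one_mod3_cadj:
  assumes "rank_one_mod3 A c r"
  shows "rank_one_mod3 (cadj A) (vec_cnj r) (vec_cnj c)"
proof -
  obtain l E where l: "nonzero_mod3 l" "gaussian_mat E"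
    and A_eq: "A = (\<chi> i j. l * c $ i * r $ j + 3 * E $ i $ j)"
    using assms unfolding rank_one_mod3_def by blast
  have "gaussian_vec (vec_cnj c)" "gaussian_vec (vec_cnj r)"
    using assms by (auto simp: rank_one_mod3_def gaussian_vec_def vec_cnj_def)
  moreover have "nonzero_mod3 (cnj l)" "gaussian_mat (cadj E)"
    using l by (auto simp: nonzero_mod3_cnj gaussian_mat_def cadj_def)
  moreover have "cadj A = (\<chi> i j. cnj l * vec_cnj r $ i * vec_cnj c $ j + 3 * cadj E $ i $ j)"
    by (simp add: A_eq cadj_def vec_cnj_def vec_eq_iff)
  ultimately show ?thesis
    unfolding rank_one_mod3_def by blast
qed

lemma rank_one_mod3_entry_nonzero:
  assumes "rank_one_mod3 A c r" "nonzero_mod3 (c $ i * r $ j)"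
  shows "A $ i $ j \<noteq> 0"
proof -
  obtain l E where l: "nonzero_mod3 l" "gaussian_mat E"
    and A_eq: "A = (\<chi> i j. l * c $ i * r $ j + 3 * E $ i $ j)"
    using assms(1) unfolding rank_one_mod3_def by blast
  have "nonzero_mod3 (l * (c $ i * r $ j))"
    using l(1) assms(2) by (rule nonzero_mod3_mult)
  moreover have "gaussian_int (E $ i $ j)"
    using l by (simp add: gaussian_mat_def)
  ultimately show ?thesis
    unfolding A_eq by (simp add: nonzero_mod3_add_3_mult mult.assoc)
qed

section \<open>Word matrices and separation\<close>

fun word_mat :: "('s \<Rightarrow> 'a::semiring_1^'n^'n) \<Rightarrow> 's list \<Rightarrow> 'a^'n^'n" where
  "word_mat T [] = mat 1"
| "word_mat T (\<sigma> # w) = word_mat T w ** T \<sigma>"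

lemma word_mat_append: "word_mat T (u @ v) = word_mat T v ** word_mat T u"
  by (induction u) (simp_all add: matrix_mul_assoc)

lemma final_state_eq_word_mat: "final_state M w = word_mat (trans M) w *v init M"
proof -
  have "fold (\<lambda>\<sigma> v. trans M \<sigma> *v v) w v0 = word_mat (trans M) w *v v0" for v0
    by (induction w arbitrary: v0) (simp_all add: matrix_vector_mul_assoc)
  then show ?thesis by (simp add: final_state_def)
qed

lemma word_mat_scaleR:
  fixes T :: "'s \<Rightarrow> 'a::real_algebra_1^'n^'n"
  shows "word_mat (\<lambda>\<sigma>. k *\<^sub>R T \<sigma>) w = k ^ length w *\<^sub>R word_mat T w"
  by (induction w) (simp_all add: matrix_scalar_ac scalar_matrix_assoc[symmetric] mult.commute)

lemma cadj_mult: "cadj (A ** B) = cadj B ** cadj A"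
  by (simp add: cadj_def vec_eq_iff matrix_matrix_mult_def mult.commute)

lemma cadj_mat_1 [simp]: "cadj (mat 1) = mat 1"
  by (simp add: cadj_def vec_eq_iff mat_def)

lemma cadj_scaleR: "cadj (k *\<^sub>R A) = k *\<^sub>R cadj A"
  by (simp add: cadj_def vec_eq_iff)

lemma unitary_mat_mult: "unitary_mat A \<Longrightarrow> unitary_mat B \<Longrightarrow> unitary_mat (A ** B)"
  unfolding unitary_mat_def cadj_mult
  by (metis matrix_mul_assoc matrix_mul_lid)

lemma unitary_mat_1: "unitary_mat (mat 1)"
  by (simp add: unitary_mat_def)

lemma unitary_mat_word_mat: "(\<And>\<sigma>. unitary_mat (T \<sigma>)) \<Longrightarrow> unitary_mat (word_mat T w)"
  by (induction w) (simp_all add: unitary_mat_1 unitary_mat_mult)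

lemma word_mat_common_prefix:
  assumes "\<And>\<sigma>. unitary_mat (T \<sigma>)"
  shows "word_mat T (w @ y) ** cadj (word_mat T (w @ x)) = word_mat T y ** cadj (word_mat T x)"
proof -
  have "word_mat T w ** cadj (word_mat T w) = mat 1"
    using unitary_mat_word_mat[of T w, OF assms] unfolding unitary_mat_def by blast
  then show ?thesis
    by (simp add: word_mat_append cadj_mult matrix_mul_assoc flip: matrix_mul_assoc[of _ "word_mat T w"])
qed

lemma norm_cadj_mult_axis:
  assumes "U ** cadj U = mat 1"
  shows "norm (cadj U *v axis k 1) = 1"
proof -
  have "(\<Sum>i\<in>UNIV. U $ k $ i * cnj (U $ k $ i)) = 1"
    using assms by (simp add: vec_eq_iff matrix_matrix_mult_def cadj_def mat_def)
  moreover have "(\<Sum>i\<in>UNIV. (cmod (U $ k $ i))\<^sup>2) = Re (\<Sum>i\<in>UNIV. U $ k $ i * cnj (U $ k $ i))"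
    by (simp add: Re_sum complex_mult_cnj cmod_power2)
  ultimately have "(\<Sum>i\<in>UNIV. (cmod (U $ k $ i))\<^sup>2) = 1"
    by simp
  moreover have "(cadj U *v axis k 1) $ i = cnj (U $ k $ i)" for i
    by (simp add: matrix_vector_mult_def cadj_def axis_def if_distrib cong: if_cong)
  ultimately show ?thesis
    by (simp add: norm_vec_def L2_set_def)
qed

text \<open>Starting in \<open>U\<^sub>x\<^sup>* e\<^sub>2\<close>, the word \<open>x\<close> ends in the rejecting state \<open>e\<^sub>2\<close>, while the amplitude
  of the accepting state after \<open>y\<close> is the given entry of \<open>U\<^sub>y U\<^sub>x\<^sup>*\<close>.\<close>

lemma separates_nondet_if_entry_nonzero:
  fixes T :: "'s \<Rightarrow> complex^2^2"
  assumes U: "\<And>\<sigma>. unitary_mat (T \<sigma>)"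
    and entry: "(word_mat T y ** cadj (word_mat T x)) $ 1 $ 2 \<noteq> 0"
  shows "\<exists>M. is_mcqfa2 M \<and> separates_nondet M x y"
proof -
  define P where "P = word_mat T x"
  define e :: "complex^2" where "e = axis 2 1"
  have e1: "e $ 1 = 0"
    by (simp add: e_def axis_def)
  define M where "M = \<lparr>trans = T, init = cadj P *v e, accepting = {1 :: 2}\<rparr>"
  have P: "P ** cadj P = mat 1"
    using unitary_mat_word_mat[of T x, OF U] unfolding P_def unitary_mat_def by blast
  have "is_mcqfa2 M"
    using U norm_cadj_mult_axis[OF P] by (simp add: is_mcqfa2_def M_def e_def)
  moreover have "final_state M x = e"
    by (simp add: final_state_eq_word_mat M_def matrix_vector_mul_assoc P_def[symmetric] P)
  then have "acc_prob M x = 0"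
    by (simp add: acc_prob_def M_def e1)
  moreover have "final_state M y $ 1 = (word_mat T y ** cadj P) $ 1 $ 2"
    by (simp add: final_state_eq_word_mat M_def matrix_vector_mul_assoc e_def
        matrix_vector_mult_def matrix_matrix_mult_def axis_def if_distrib cong: if_cong)
  then have "acc_prob M y > 0"
    using entry by (simp add: acc_prob_def M_def P_def)
  ultimately show ?thesis
    unfolding separates_nondet_def by blast
qed

section \<open>The two generators\<close>

definition colA :: "complex^2" where "colA = vector [1, 1 - \<i>]"
definition rowA :: "complex^2" where "rowA = vector [1 + \<i>, 1]"
definition colB :: "complex^2" where "colB = vector [1, 1 + \<i>]"
definition rowB :: "complex^2" where "rowB = vector [1 - \<i>, 1]"

definition HA :: "complex^2^2" where "HA = vector [vector [1 + \<i>, 1], vector [-1, 1 - \<i>]]"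
definition HB :: "complex^2^2" where "HB = vector [vector [1 - \<i>, 1], vector [-1, 1 + \<i>]]"

lemma nonzero_mod3_row_col:
  assumes "u \<in> {rowA, rowB}" "v \<in> {colA, colB}"
  shows "nonzero_mod3 (\<Sum>k\<in>UNIV. u $ k * v $ k)" "nonzero_mod3 (\<Sum>k\<in>UNIV. v $ k * u $ k)"
  using assms
  by (auto simp: sum_2 rowA_def rowB_def colA_def colB_def nonzero_mod3_def gaussian_int_def)

lemma nonzero_mod3_rowB_rowB: "nonzero_mod3 (\<Sum>k\<in>UNIV. rowB $ k * rowB $ k)"
  by (simp add: sum_2 rowB_def nonzero_mod3_def gaussian_int_def)

lemma nonzero_mod3_col1_row2:
  assumes "c \<in> {colA, colB}" "r \<in> {rowA, rowB, colA, colB}"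
  shows "nonzero_mod3 (c $ 1 * r $ 2)"
  using assms
  by (auto simp: rowA_def rowB_def colA_def colB_def nonzero_mod3_def gaussian_int_def)

lemma vec_cnj_col_row [simp]:
  "vec_cnj colA = colB" "vec_cnj colB = colA" "vec_cnj rowA = rowB" "vec_cnj rowB = rowA"
  by (simp_all add: vec_cnj_def colA_def colB_def rowA_def rowB_def vec_eq_iff forall_2)

lemma rank_one_mod3_HA: "rank_one_mod3 HA colA rowA"
  unfolding rank_one_mod3_def
proof (intro conjI exI)
  show "HA = (\<chi> i j. 1 * colA $ i * rowA $ j + 3 * vector [vector [0, 0], vector [-1, 0]] $ i $ j)"
    by (simp add: HA_def colA_def rowA_def vec_eq_iff forall_2 algebra_simps)
qed (auto simp: gaussian_vec_def gaussian_mat_def nonzero_mod3_def gaussian_int_def forall_2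
    colA_def rowA_def)

lemma rank_one_mod3_HB: "rank_one_mod3 HB colB rowB"
  unfolding rank_one_mod3_def
proof (intro conjI exI)
  show "HB = (\<chi> i j. 1 * colB $ i * rowB $ j + 3 * vector [vector [0, 0], vector [-1, 0]] $ i $ j)"
    by (simp add: HB_def colB_def rowB_def vec_eq_iff forall_2 algebra_simps)
qed (auto simp: gaussian_vec_def gaussian_mat_def nonzero_mod3_def gaussian_int_def forall_2
    colB_def rowB_def)

lemma unitary_mat_scaleR_sqrt3:
  assumes "cadj H ** H = mat 3" "H ** cadj H = mat 3"
  shows "unitary_mat ((1 / sqrt 3) *\<^sub>R H)"
proof -
  have "(1 / sqrt 3 * (1 / sqrt 3)) *\<^sub>R (mat 3 :: complex^'n^'n) = mat 1"
    by (simp add: vec_eq_iff mat_def) (simp add: scaleR_conv_of_real)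
  then show ?thesis
    by (simp add: unitary_mat_def cadj_scaleR matrix_scalar_ac assms
        flip: scalar_matrix_assoc)
qed

lemma unitary_mat_HA: "unitary_mat ((1 / sqrt 3) *\<^sub>R HA)"
  by (rule unitary_mat_scaleR_sqrt3)
    (simp_all add: HA_def cadj_def vec_eq_iff forall_2 matrix_matrix_mult_def sum_2 mat_def
      complex_eq_iff)

lemma unitary_mat_HB: "unitary_mat ((1 / sqrt 3) *\<^sub>R HB)"
  by (rule unitary_mat_scaleR_sqrt3)
    (simp_all add: HB_def cadj_def vec_eq_iff forall_2 matrix_matrix_mult_def sum_2 mat_def
      complex_eq_iff)

definition letter_mat :: "'s \<Rightarrow> 's \<Rightarrow> complex^2^2" where
  "letter_mat a \<sigma> = (if \<sigma> = a then HA else HB)"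

lemma letter_mat_rank_one:
  obtains c r where "rank_one_mod3 (letter_mat a \<sigma>) c r" "c \<in> {colA, colB}" "r \<in> {rowA, rowB}"
  using rank_one_mod3_HA rank_one_mod3_HB unfolding letter_mat_def by (cases "\<sigma> = a") auto

lemma rank_one_mod3_word_mat_left:
  assumes "rank_one_mod3 N c r" "c \<in> {colA, colB}"
  shows "\<exists>c' \<in> {colA, colB}. rank_one_mod3 (word_mat (letter_mat a) w ** N) c' r"
  using assms
proof (induction w arbitrary: N c)
  case (Cons \<sigma> w)
  obtain c0 r0 where H: "rank_one_mod3 (letter_mat a \<sigma>) c0 r0" "c0 \<in> {colA, colB}" "r0 \<in> {rowA, rowB}"
    by (rule letter_mat_rank_one)
  have "rank_one_mod3 (letter_mat a \<sigma> ** N) c0 r"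
    using H(1) Cons.prems(1) nonzero_mod3_row_col(1)[OF H(3) Cons.prems(2)]
    by (rule rank_one_mod3_mult)
  from Cons.IH[OF this H(2)] show ?case
    by (simp add: matrix_mul_assoc)
qed auto

lemma rank_one_mod3_word_mat_right:
  assumes "rank_one_mod3 N c r" "r \<in> {colA, colB}"
  shows "\<exists>r' \<in> {colA, colB}. rank_one_mod3 (N ** cadj (word_mat (letter_mat a) w)) c r'"
  using assms
proof (induction w arbitrary: N r)
  case (Cons \<sigma> w)
  obtain c0 r0 where H: "rank_one_mod3 (letter_mat a \<sigma>) c0 r0" "c0 \<in> {colA, colB}" "r0 \<in> {rowA, rowB}"
    by (rule letter_mat_rank_one)
  have "rank_one_mod3 (cadj (letter_mat a \<sigma>)) (vec_cnj r0) (vec_cnj c0)"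
    using H(1) by (rule rank_one_mod3_cadj)
  moreover have "vec_cnj r0 \<in> {rowA, rowB}" "vec_cnj c0 \<in> {colA, colB}"
    using H(2,3) by auto
  ultimately have "rank_one_mod3 (N ** cadj (letter_mat a \<sigma>)) c (vec_cnj c0)"
    using Cons.prems nonzero_mod3_row_col(2) by (blast intro: rank_one_mod3_mult)
  from Cons.IH[OF this \<open>vec_cnj c0 \<in> _\<close>] show ?case
    by (simp add: cadj_mult matrix_mul_assoc)
qed auto

lemma rank_one_mod3_entry_12:
  assumes "rank_one_mod3 N c r" "c \<in> {colA, colB}" "r \<in> {rowA, rowB, colA, colB}"
  shows "N $ 1 $ 2 \<noteq> 0"
  using assms(1) nonzero_mod3_col1_row2[OF assms(2,3)] by (rule rank_one_mod3_entry_nonzero)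

lemma word_mat_letter_entry_nonzero:
  assumes "v \<noteq> []"
  shows "word_mat (letter_mat a) v $ 1 $ 2 \<noteq> 0"
proof -
  obtain \<sigma> v' where v: "v = \<sigma> # v'"
    using assms by (cases v) auto
  obtain c0 r0 where H: "rank_one_mod3 (letter_mat a \<sigma>) c0 r0" "c0 \<in> {colA, colB}" "r0 \<in> {rowA, rowB}"
    by (rule letter_mat_rank_one)
  obtain c where "c \<in> {colA, colB}" "rank_one_mod3 (word_mat (letter_mat a) v) c r0"
    using rank_one_mod3_word_mat_left[OF H(1,2), of a v'] by (auto simp: v)
  moreover have "r0 \<in> {rowA, rowB, colA, colB}"
    using H(3) by auto
  ultimately show ?thesis
    using rank_one_mod3_entry_12 by metis
qed

lemma word_mat_letter_branch_entry_nonzero: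
  assumes "a \<noteq> b"
  shows "(word_mat (letter_mat a) (b # v) ** cadj (word_mat (letter_mat a) (a # u))) $ 1 $ 2 \<noteq> 0"
proof -
  let ?W = "word_mat (letter_mat a)"
  have "rank_one_mod3 (HB ** cadj HA) colB (vec_cnj colA)"
    using rank_one_mod3_HB rank_one_mod3_cadj[OF rank_one_mod3_HA] nonzero_mod3_rowB_rowB
    by (auto intro: rank_one_mod3_mult)
  then obtain r where r: "r \<in> {colA, colB}" "rank_one_mod3 ((HB ** cadj HA) ** cadj (?W u)) colB r"
    using rank_one_mod3_word_mat_right[of _ colB "vec_cnj colA" a u] by auto
  then obtain c where "c \<in> {colA, colB}" "rank_one_mod3 (?W v ** ((HB ** cadj HA) ** cadj (?W u))) c r"
    using rank_one_mod3_word_mat_left[of _ colB r a v] by auto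
  moreover have "?W (b # v) ** cadj (?W (a # u)) = ?W v ** ((HB ** cadj HA) ** cadj (?W u))"
    using assms by (simp add: letter_mat_def cadj_mult matrix_mul_assoc)
  moreover have "r \<in> {rowA, rowB, colA, colB}"
    using r(1) by auto
  ultimately show ?thesis
    using rank_one_mod3_entry_12 by metis
qed

lemma separates_nondet_common_prefix:
  fixes x y w :: "'s list"
  assumes entry: "(word_mat (letter_mat a) y ** cadj (word_mat (letter_mat a) x)) $ 1 $ 2 \<noteq> 0"
  shows "\<exists>M. is_mcqfa2 M \<and> separates_nondet M (w @ x) (w @ y)"
proof (rule separates_nondet_if_entry_nonzero)
  let ?k = "1 / sqrt 3 :: real"
  let ?T = "\<lambda>\<sigma>. ?k *\<^sub>R letter_mat a \<sigma>"
  show U: "unitary_mat (?T \<sigma>)" for \<sigma>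
    using unitary_mat_HA unitary_mat_HB by (simp add: letter_mat_def)
  have "word_mat ?T (w @ y) ** cadj (word_mat ?T (w @ x)) = word_mat ?T y ** cadj (word_mat ?T x)"
    by (rule word_mat_common_prefix[OF U])
  also have "\<dots> = (?k ^ length y * ?k ^ length x) *\<^sub>R
      (word_mat (letter_mat a) y ** cadj (word_mat (letter_mat a) x))"
    by (simp add: word_mat_scaleR cadj_scaleR matrix_scalar_ac flip: scalar_matrix_assoc)
  finally show "(word_mat ?T (w @ y) ** cadj (word_mat ?T (w @ x))) $ 1 $ 2 \<noteq> 0"
    using entry by simp
qed

lemma neq_list_cases:
  assumes "x \<noteq> y"
  obtains (prefix) v where "v \<noteq> []" "y = x @ v"
  | (prefix') v where "v \<noteq> []" "x = y @ v"
  | (branch) w a b u v where "a \<noteq> b" "x = w @ a # u" "y = w @ b # v"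
proof -
  have "(\<exists>v. v \<noteq> [] \<and> y = x @ v) \<or> (\<exists>v. v \<noteq> [] \<and> x = y @ v) \<or>
      (\<exists>w a b u v. a \<noteq> b \<and> x = w @ a # u \<and> y = w @ b # v)"
    using assms
  proof (induction x arbitrary: y)
    case (Cons a x)
    show ?case
    proof (cases y)
      case (Cons b y')
      show ?thesis
      proof (cases "a = b")
        case True
        with Cons \<open>a # x \<noteq> y\<close> have "x \<noteq> y'" by simp
        from Cons.IH[OF this] show ?thesis
          using Cons True by (metis append_Cons)
      next
        case False
        then show ?thesis using Cons by (metis append_Nil)
      qed
    qed simp
  qed simp
  then show ?thesis
    using that by blast
qed

lemma separates_nondet_sym: "separates_nondet M x y \<longleftrightarrow> separates_nondet M y x"
  unfolding separates_nondet_def by blast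

theorem mainTheorem5:
  fixes x y :: "'s::finite list"
  assumes "x \<noteq> y"
  shows "\<exists>M :: 's mcqfa2. is_mcqfa2 M \<and> separates_nondet M x y"
  using assms
proof (cases rule: neq_list_cases)
  case (prefix v)
  then have "(word_mat (letter_mat a) v ** cadj (word_mat (letter_mat a) [])) $ 1 $ 2 \<noteq> 0"
    for a :: 's
    by (simp add: word_mat_letter_entry_nonzero)
  from separates_nondet_common_prefix[OF this, of x] show ?thesis
    using prefix by simp
next
  case (prefix' v)
  then have "(word_mat (letter_mat a) v ** cadj (word_mat (letter_mat a) [])) $ 1 $ 2 \<noteq> 0"
    for a :: 's
    by (simp add: word_mat_letter_entry_nonzero)
  from separates_nondet_common_prefix[OF this, of y] show ?thesis
    using prefix'(2) separates_nondet_sym by auto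
next
  case (branch w a b u v)
  have "\<exists>M. is_mcqfa2 M \<and> separates_nondet M (w @ a # u) (w @ b # v)"
    by (rule separates_nondet_common_prefix[OF word_mat_letter_branch_entry_nonzero[OF branch(1)]])
  then show ?thesis
    using branch by simp
qed

end
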